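(* There exist absolute constants $c_1,c_2,C_0>0$ such that the following holds. Suppose $w$ is normalized so that $\sum_{i=1}^n\log w_i=0$, and suppose $\delta\le e^{-1}$, $C_{n,\delta}\ge c_1\log(n/\delta)$, and $k\ge c_2\, b\,(C_{n,\delta}+1)\max\{\Omega_{\max},E_{\max}\}$. Then with probability at least $1-\delta$, all $R_{ij}\in(0,\infty)$ and $$\log\widehat W-\log w=L^\dagger B V(F-p)+L^\dagger B\Delta,\qquad \|\Delta\|_\infty\le C_0\frac{b\,C_{n,\delta}}{k}.$$
   Context: $G=(V,E)$ is an undirected connected graph on $V=\{1,\dots,n\}$, each edge with a fixed orientation $(i,j)$; $B\in\mathbb{R}^{n\times|E|}$ is the incidence matrix (column of edge $(i,j)$ has $+1$ in row $i$, $-1$ in row $j$, zeros elsewhere), $L=BB^T$, $L^\dagger$ its Moore–Penrose pseudoinverse. Weights $w$ are positive with $b\ge\max_{i,j}w_i/w_j$. For each edge $(i,j)$, $k$ independent comparisons are made, $i$ winning each with probability $p_{ij}=w_i/(w_i+w_j)$ (independent across edges); $F_{ij}$ is the fraction won by $i$, $F_{ji}=1-F_{ij}$, $R_{ij}=F_{ij}/F_{ji}$, $\rho_{ij}=w_i/w_j$, $v_{ij}=\rho_{ij}+2+\rho_{ij}^{-1}$. $F,p,R,\rho\in\mathbb{R}^{|E|}$ stack these quantities over edges in the orientation order, $V$ is the $|E|\times|E|$ diagonal matrix with entries $v_{ij}$. The estimator is $\log\widehat W=L^\dagger B\log R$ (entrywise logarithms). $\Delta:=\log R-\log\rho-V(F-p)\in\mathbb{R}^{|E|}$.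 $\Omega_{\max}$ is the maximum effective resistance $(e_i-e_j)^TL^\dagger(e_i-e_j)$ over pairs, $E_{\max}=\max_{i,j}|E_{ij}|$ where $E_{ij}$ is the set of edges on at least one simple path from $i$ to $j$. $C_{n,\delta}$ is a parameter. *)

theory Defs
  imports "Jordan_Normal_Form.Matrix" "HOL-Probability.Product_PMF"
begin

hide_type (open) Finite_Cartesian_Product.vec
hide_const (open) Finite_Cartesian_Product.mat Finite_Cartesian_Product.vec Finite_Cartesian_Product.transpose Finite_Cartesian_Product.vec_nth

text \<open>Vertices are 0..<n (paper vertex i corresponds to index i-1).
  The oriented edge list Es has length m = |E|; edge number e is (fst (Es!e), snd (Es!e)).\<close>

definition adjacent :: "(nat \<times> nat) list \<Rightarrow> nat \<Rightarrow> nat \<Rightarrow> bool" where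
  "adjacent Es u v \<longleftrightarrow> (u, v) \<in> set Es \<or> (v, u) \<in> set Es"

definition simple_graph_edges :: "nat \<Rightarrow> (nat \<times> nat) list \<Rightarrow> bool" where
  "simple_graph_edges n Es \<longleftrightarrow>
     (\<forall>(i, j) \<in> set Es. i < n \<and> j < n \<and> i \<noteq> j) \<and>
     distinct (map (\<lambda>(i, j). {i, j}) Es)"

definition connected_graph :: "nat \<Rightarrow> (nat \<times> nat) list \<Rightarrow> bool" where
  "connected_graph n Es \<longleftrightarrow>
     (\<forall>i<n. \<forall>j<n. (i, j) \<in> {(u, v). adjacent Es u v}\<^sup>*)"

definition incidence :: "nat \<Rightarrow> (nat \<times> nat) list \<Rightarrow> real mat" where
  "incidence n Es = mat n (length Es)
     (\<lambda>(i, e). if i = fst (Es ! e) then 1 else if i = snd (Es ! e) then -1 else 0)"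

definition laplacian :: "nat \<Rightarrow> (nat \<times> nat) list \<Rightarrow> real mat" where
  "laplacian n Es = incidence n Es * transpose_mat (incidence n Es)"

definition is_pinv :: "real mat \<Rightarrow> real mat \<Rightarrow> bool" where
  "is_pinv A X \<longleftrightarrow> X \<in> carrier_mat (dim_col A) (dim_row A) \<and>
     A * X * A = A \<and> X * A * X = X \<and>
     transpose_mat (A * X) = A * X \<and> transpose_mat (X * A) = X * A"

definition pinv :: "real mat \<Rightarrow> real mat" where
  "pinv A = (THE X. is_pinv A X)"

definition eff_res :: "nat \<Rightarrow> (nat \<times> nat) list \<Rightarrow> nat \<Rightarrow> nat \<Rightarrow> real" where
  "eff_res n Es i j = (let d = unit_vec n i - unit_vec n j in
     scalar_prod d (mult_mat_vec (pinv (laplacian n Es)) d))"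

definition Omega_max :: "nat \<Rightarrow> (nat \<times> nat) list \<Rightarrow> real" where
  "Omega_max n Es = Max {eff_res n Es i j | i j. i < n \<and> j < n}"

definition simple_path :: "(nat \<times> nat) list \<Rightarrow> nat \<Rightarrow> nat \<Rightarrow> nat list \<Rightarrow> bool" where
  "simple_path Es i j ps \<longleftrightarrow> ps \<noteq> [] \<and> hd ps = i \<and> last ps = j \<and> distinct ps \<and>
     (\<forall>t. Suc t < length ps \<longrightarrow> adjacent Es (ps ! t) (ps ! Suc t))"

definition edge_on_path :: "(nat \<times> nat) list \<Rightarrow> nat \<Rightarrow> nat list \<Rightarrow> bool" where
  "edge_on_path Es e ps \<longleftrightarrow>
     (\<exists>t. Suc t < length ps \<and> {ps ! t, ps ! Suc t} = {fst (Es ! e), snd (Es ! e)})"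

definition path_edges :: "(nat \<times> nat) list \<Rightarrow> nat \<Rightarrow> nat \<Rightarrow> nat set" where
  "path_edges Es i j = {e. e < length Es \<and> (\<exists>ps. simple_path Es i j ps \<and> edge_on_path Es e ps)}"

definition E_max :: "nat \<Rightarrow> (nat \<times> nat) list \<Rightarrow> nat" where
  "E_max n Es = Max {card (path_edges Es i j) | i j. i < n \<and> j < n}"

text \<open>Edge quantities; the random outcome is X e = number of wins of fst (Es!e) over snd (Es!e).\<close>
definition p_edge :: "(nat \<Rightarrow> real) \<Rightarrow> (nat \<times> nat) list \<Rightarrow> nat \<Rightarrow> real" where
  "p_edge w Es e = w (fst (Es ! e)) / (w (fst (Es ! e)) + w (snd (Es ! e)))"

definition rho_edge :: "(nat \<Rightarrow> real) \<Rightarrow> (nat \<times> nat) list \<Rightarrow> nat \<Rightarrow> real" where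
  "rho_edge w Es e = w (fst (Es ! e)) / w (snd (Es ! e))"

definition v_edge :: "(nat \<Rightarrow> real) \<Rightarrow> (nat \<times> nat) list \<Rightarrow> nat \<Rightarrow> real" where
  "v_edge w Es e = rho_edge w Es e + 2 + 1 / rho_edge w Es e"

definition F_edge :: "nat \<Rightarrow> (nat \<Rightarrow> nat) \<Rightarrow> nat \<Rightarrow> real" where
  "F_edge k X e = real (X e) / real k"

definition R_edge :: "nat \<Rightarrow> (nat \<Rightarrow> nat) \<Rightarrow> nat \<Rightarrow> real" where
  "R_edge k X e = F_edge k X e / (1 - F_edge k X e)"

definition comparisons :: "(nat \<Rightarrow> real) \<Rightarrow> (nat \<times> nat) list \<Rightarrow> nat \<Rightarrow> (nat \<Rightarrow> nat) pmf" where
  "comparisons w Es k = Pi_pmf {..<length Es} 0 (\<lambda>e. binomial_pmf k (p_edge w Es e))"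

definition Vmat :: "(nat \<Rightarrow> real) \<Rightarrow> (nat \<times> nat) list \<Rightarrow> real mat" where
  "Vmat w Es = mat (length Es) (length Es) (\<lambda>(e, f). if e = f then v_edge w Es e else 0)"

definition Fvec :: "(nat \<times> nat) list \<Rightarrow> nat \<Rightarrow> (nat \<Rightarrow> nat) \<Rightarrow> real vec" where
  "Fvec Es k X = vec (length Es) (F_edge k X)"

definition pvec :: "(nat \<Rightarrow> real) \<Rightarrow> (nat \<times> nat) list \<Rightarrow> real vec" where
  "pvec w Es = vec (length Es) (p_edge w Es)"

definition logR :: "(nat \<times> nat) list \<Rightarrow> nat \<Rightarrow> (nat \<Rightarrow> nat) \<Rightarrow> real vec" where
  "logR Es k X = vec (length Es) (\<lambda>e. ln (R_edge k X e))"

definition logrho :: "(nat \<Rightarrow> real) \<Rightarrow> (nat \<times> nat) list \<Rightarrow> real vec" where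
  "logrho w Es = vec (length Es) (\<lambda>e. ln (rho_edge w Es e))"

definition Delta :: "(nat \<Rightarrow> real) \<Rightarrow> (nat \<times> nat) list \<Rightarrow> nat \<Rightarrow> (nat \<Rightarrow> nat) \<Rightarrow> real vec" where
  "Delta w Es k X = logR Es k X - logrho w Es - mult_mat_vec (Vmat w Es) (Fvec Es k X - pvec w Es)"

definition logWhat :: "nat \<Rightarrow> (nat \<times> nat) list \<Rightarrow> nat \<Rightarrow> (nat \<Rightarrow> nat) \<Rightarrow> real vec" where
  "logWhat n Es k X = mult_mat_vec (pinv (laplacian n Es)) (mult_mat_vec (incidence n Es) (logR Es k X))"

definition logw :: "nat \<Rightarrow> (nat \<Rightarrow> real) \<Rightarrow> real vec" where
  "logw n w = vec n (\<lambda>i. ln (w i))"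

end

theory Submission
  imports Defs "Jordan_Normal_Form.Determinant"
begin

(* Edgewise, log R = log rho + V (F - p) + Delta by the definition of Delta, and
   log rho = B^T log w.  Hence L^+ B log R - log w = L^+ B V (F - p) + L^+ B Delta as soon as
   L^+ L log w = log w, which holds because log w sums to zero and the kernel of the Laplacian
   of a connected graph consists of the constant vectors; L^+ itself is (L + P)^-1 - P for the
   averaging projection P = J/n.

   For the bound on Delta, a second-order expansion of the log-odds gives
   |Delta_e| <= 4 (F_e - p_e)^2 / (p_e (1 - p_e))^2.  A variance-sensitive Chernoff bound makes
   (F_e - p_e)^2 <= 4 p_e (1 - p_e) C / k hold on all edges simultaneously, except with
   probability 2 |E| exp (-C) <= 2 n^2 exp (-C) <= delta.  Since p_e (1 - p_e) >= 1 / (4 b),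
   this gives |Delta_e| <= 64 b C / k. *)

unbundle no vec_syntax
hide_const (open) Finite_Cartesian_Product.row Finite_Cartesian_Product.column

section \<open>Incidence matrix and Laplacian\<close>

lemma incidence_dim [simp]: "dim_row (incidence n Es) = n" "dim_col (incidence n Es) = length Es"
  by (simp_all add: incidence_def)

lemma incidence_carrier [simp]: "incidence n Es \<in> carrier_mat n (length Es)"
  by (simp add: carrier_matI)

lemma laplacian_dim [simp]: "dim_row (laplacian n Es) = n" "dim_col (laplacian n Es) = n"
  by (simp_all add: laplacian_def)

lemma laplacian_carrier [simp]: "laplacian n Es \<in> carrier_mat n n"
  by (simp add: carrier_matI)

lemma laplacian_symmetric: "transpose_mat (laplacian n Es) = laplacian n Es"
  unfolding laplacian_def by (subst transpose_mult[of _ n "length Es"]) auto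

lemma laplacian_mult_vec:
  "x \<in> carrier_vec n \<Longrightarrow> laplacian n Es *\<^sub>v x = incidence n Es *\<^sub>v (transpose_mat (incidence n Es) *\<^sub>v x)"
  unfolding laplacian_def by (rule assoc_mult_mat_vec) auto

lemma simple_graph_edge_endpoints:
  assumes "simple_graph_edges n Es" and "e < length Es"
  shows "fst (Es ! e) < n" "snd (Es ! e) < n" "fst (Es ! e) \<noteq> snd (Es ! e)"
proof -
  obtain i j where ij: "Es ! e = (i, j)" by fastforce
  have "(i, j) \<in> set Es" using ij nth_mem[OF assms(2)] by simp
  then show "fst (Es ! e) < n" "snd (Es ! e) < n" "fst (Es ! e) \<noteq> snd (Es ! e)"
    using assms(1) ij unfolding simple_graph_edges_def by auto
qed

lemma length_edges_le:
  assumes "simple_graph_edges n Es"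
  shows "length Es \<le> n * n"
proof -
  have "distinct Es" using assms by (auto simp: simple_graph_edges_def distinct_map)
  moreover have "set Es \<subseteq> {..<n} \<times> {..<n}"
    using assms by (auto simp: simple_graph_edges_def)
  ultimately have "card (set Es) \<le> card ({..<n} \<times> {..<n})"
    by (intro card_mono) auto
  then show ?thesis
    using \<open>distinct Es\<close> by (simp add: distinct_card card_cartesian_product)
qed

lemma incidence_transpose_mult_vec:
  assumes "simple_graph_edges n Es" and "x \<in> carrier_vec n" and e: "e < length Es"
  shows "(transpose_mat (incidence n Es) *\<^sub>v x) $ e = x $ fst (Es ! e) - x $ snd (Es ! e)"
proof -
  note uv = simple_graph_edge_endpoints[OF assms(1) e]
  have "(transpose_mat (incidence n Es) *\<^sub>v x) $ e = col (incidence n Es) e \<bullet> x"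
    using e by simp
  also have "\<dots> = (\<Sum>i<n. (if i = fst (Es ! e) then x $ i else 0) - (if i = snd (Es ! e) then x $ i else 0))"
    using assms uv unfolding scalar_prod_def lessThan_atLeast0
    by (intro sum.cong) (auto simp: incidence_def)
  also have "\<dots> = x $ fst (Es ! e) - x $ snd (Es ! e)"
    using uv by (simp add: sum_subtractf)
  finally show ?thesis .
qed

lemma laplacian_mult_ones:
  assumes "simple_graph_edges n Es"
  shows "laplacian n Es *\<^sub>v vec n (\<lambda>_. 1) = 0\<^sub>v n"
proof -
  have "transpose_mat (incidence n Es) *\<^sub>v vec n (\<lambda>_. 1) = 0\<^sub>v (length Es)"
    using incidence_transpose_mult_vec[OF assms] simple_graph_edge_endpoints[OF assms]
    by (intro eq_vecI) auto
  then have "laplacian n Es *\<^sub>v vec n (\<lambda>_. 1) = incidence n Es *\<^sub>v 0\<^sub>v (length Es)"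
    by (simp add: laplacian_mult_vec)
  also have "\<dots> = 0\<^sub>v n"
    by (intro eq_vecI) auto
  finally show ?thesis .
qed

lemma laplacian_kernel_incidence_transpose:
  assumes x: "x \<in> carrier_vec n" and Lx: "laplacian n Es *\<^sub>v x = 0\<^sub>v n"
  shows "transpose_mat (incidence n Es) *\<^sub>v x = 0\<^sub>v (length Es)"
proof -
  define y where "y = transpose_mat (incidence n Es) *\<^sub>v x"
  have y: "y \<in> carrier_vec (length Es)" unfolding y_def by (simp add: carrier_vecI)
  have "y \<bullet> y = x \<bullet> (incidence n Es *\<^sub>v y)"
    unfolding y_def by (rule transpose_vec_mult_scalar[OF incidence_carrier y[unfolded y_def] x])
  also have "\<dots> = 0"
    using Lx x by (simp add: laplacian_mult_vec y_def)
  finally have "(\<Sum>e<length Es. (y $ e)\<^sup>2) = 0"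
    using y by (simp add: scalar_prod_def power2_eq_square lessThan_atLeast0)
  then have "\<forall>e<length Es. y $ e = 0"
    by (simp add: sum_nonneg_eq_0_iff)
  then show ?thesis
    using y unfolding y_def[symmetric] by (intro eq_vecI) auto
qed

lemma laplacian_kernel_const:
  assumes sg: "simple_graph_edges n Es" and cg: "connected_graph n Es"
    and x: "x \<in> carrier_vec n" and Lx: "laplacian n Es *\<^sub>v x = 0\<^sub>v n"
    and "i < n" "j < n"
  shows "x $ i = x $ j"
proof -
  have edge: "x $ u = x $ v" if "adjacent Es u v" for u v
  proof -
    have "x $ fst (Es ! e) = x $ snd (Es ! e)" if "e < length Es" for e
      using incidence_transpose_mult_vec[OF sg x that]
        arg_cong[OF laplacian_kernel_incidence_transpose[OF x Lx], of "\<lambda>y. y $ e"] that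
      by simp
    with \<open>adjacent Es u v\<close> show ?thesis
      unfolding adjacent_def by (metis fst_conv in_set_conv_nth snd_conv)
  qed
  have "(i, j) \<in> {(u, v). adjacent Es u v}\<^sup>*"
    using cg \<open>i < n\<close> \<open>j < n\<close> unfolding connected_graph_def by blast
  then show ?thesis
    by (induction rule: rtrancl_induct) (auto dest: edge)
qed

lemma laplacian_row_sum:
  assumes "simple_graph_edges n Es" and "i < n"
  shows "(\<Sum>j<n. laplacian n Es $$ (i, j)) = 0"
proof -
  have "(laplacian n Es *\<^sub>v vec n (\<lambda>_. 1)) $ i = 0"
    using laplacian_mult_ones[OF assms(1)] assms(2) by simp
  then show ?thesis
    using assms(2) by (simp add: scalar_prod_def lessThan_atLeast0)
qed

section \<open>The Moore--Penrose pseudoinverse of the Laplacian\<close>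

definition mean_proj :: "nat \<Rightarrow> real mat" where
  "mean_proj n = mat n n (\<lambda>_. 1 / real n)"

lemma mean_proj_dim [simp]: "dim_row (mean_proj n) = n" "dim_col (mean_proj n) = n"
  by (simp_all add: mean_proj_def)

lemma mean_proj_carrier [simp]: "mean_proj n \<in> carrier_mat n n"
  by (simp add: carrier_matI)

lemma mean_proj_symmetric: "transpose_mat (mean_proj n) = mean_proj n"
  by (intro eq_matI) (auto simp: mean_proj_def)

lemma mean_proj_idempotent:
  assumes "n > 0"
  shows "mean_proj n * mean_proj n = mean_proj n"
  using assms by (intro eq_matI) (auto simp: mean_proj_def scalar_prod_def)

lemma mean_proj_mult_vec:
  assumes "x \<in> carrier_vec n" and "i < n"
  shows "(mean_proj n *\<^sub>v x) $ i = (\<Sum>j<n. x $ j) / real n"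
  using assms by (simp add: mean_proj_def scalar_prod_def lessThan_atLeast0 sum_divide_distrib)

lemma laplacian_mult_mean_proj:
  assumes "simple_graph_edges n Es"
  shows "laplacian n Es * mean_proj n = 0\<^sub>m n n"
proof (intro eq_matI)
  fix i j assume "i < dim_row (0\<^sub>m n n :: real mat)" "j < dim_col (0\<^sub>m n n :: real mat)"
  then show "(laplacian n Es * mean_proj n) $$ (i, j) = 0\<^sub>m n n $$ (i, j)"
    using laplacian_row_sum[OF assms, of i]
    by (simp add: mean_proj_def scalar_prod_def lessThan_atLeast0 flip: sum_divide_distrib)
qed auto

lemma mean_proj_mult_laplacian:
  assumes "simple_graph_edges n Es"
  shows "mean_proj n * laplacian n Es = 0\<^sub>m n n"
proof -
  have "mean_proj n * laplacian n Es = transpose_mat (laplacian n Es * mean_proj n)"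
    by (simp add: transpose_mult[OF laplacian_carrier mean_proj_carrier]
        laplacian_symmetric mean_proj_symmetric)
  also have "\<dots> = 0\<^sub>m n n"
    by (simp add: laplacian_mult_mean_proj[OF assms])
  finally show ?thesis .
qed

lemma is_pinv_carrier:
  "is_pinv A X \<Longrightarrow> X \<in> carrier_mat (dim_col A) (dim_row A)"
  by (simp add: is_pinv_def)

lemma is_pinv_transpose:
  assumes "is_pinv A X"
  shows "is_pinv (transpose_mat A) (transpose_mat X)"
proof -
  obtain r c where A: "A \<in> carrier_mat r c"
    by (rule that[OF carrier_matI[OF refl refl]])
  have X: "X \<in> carrier_mat c r"
    using is_pinv_carrier[OF assms] carrier_matD[OF A] by simp
  have AT: "transpose_mat A \<in> carrier_mat c r" and XT: "transpose_mat X \<in> carrier_mat r c"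
    using A X by auto
  have AXA: "A * X * A = A" and XAX: "X * A * X = X"
    and AX: "transpose_mat (A * X) = A * X" and XA: "transpose_mat (X * A) = X * A"
    using assms by (simp_all add: is_pinv_def)
  have XTAT: "transpose_mat X * transpose_mat A = A * X"
    using transpose_mult[OF A X] AX by simp
  have ATXT: "transpose_mat A * transpose_mat X = X * A"
    using transpose_mult[OF X A] XA by simp
  have "transpose_mat A * transpose_mat X * transpose_mat A = transpose_mat A * (A * X)"
    using assoc_mult_mat[OF AT XT AT] XTAT by simp
  also have "\<dots> = transpose_mat (A * X * A)"
    using transpose_mult[OF mult_carrier_mat[OF A X] A] AX by simp
  finally have 1: "transpose_mat A * transpose_mat X * transpose_mat A = transpose_mat A"
    unfolding AXA .
  have "transpose_mat X * transpose_mat A * transpose_mat X = transpose_mat X * (X * A)"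
    using assoc_mult_mat[OF XT AT XT] ATXT by simp
  also have "\<dots> = transpose_mat (X * A * X)"
    using transpose_mult[OF mult_carrier_mat[OF X A] X] XA by simp
  finally have 2: "transpose_mat X * transpose_mat A * transpose_mat X = transpose_mat X"
    unfolding XAX .
  show ?thesis
    unfolding is_pinv_def using XT 1 2 carrier_matD[OF A] by (simp add: ATXT XTAT XA AX)
qed

lemma is_pinv_left_mult_unique:
  assumes X: "is_pinv A X" and Y: "is_pinv A Y"
  shows "A * X = A * Y"
proof -
  obtain r c where A: "A \<in> carrier_mat r c"
    by (rule that[OF carrier_matI[OF refl refl]])
  have Xc: "X \<in> carrier_mat c r" and Yc: "Y \<in> carrier_mat c r"
    using is_pinv_carrier[OF X] is_pinv_carrier[OF Y] carrier_matD[OF A] by simp_all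
  have AT: "transpose_mat A \<in> carrier_mat c r" and XT: "transpose_mat X \<in> carrier_mat r c"
    using A Xc by auto
  have AY: "A * Y \<in> carrier_mat r r" using A Yc by simp
  have ATAY: "transpose_mat A = transpose_mat A * (A * Y)"
  proof -
    have "transpose_mat A = transpose_mat (A * Y * A)"
      using Y by (simp add: is_pinv_def)
    also have "\<dots> = transpose_mat A * transpose_mat (A * Y)"
      by (rule transpose_mult[OF AY A])
    finally show ?thesis
      using Y by (simp add: is_pinv_def)
  qed
  have "A * X = transpose_mat X * transpose_mat A"
    using X transpose_mult[OF A Xc] by (simp add: is_pinv_def)
  also have "\<dots> = (transpose_mat X * transpose_mat A) * (A * Y)"
    by (subst ATAY) (rule assoc_mult_mat[OF XT AT AY, symmetric])
  also have "transpose_mat X * transpose_mat A = A * X"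
    using X transpose_mult[OF A Xc] by (simp add: is_pinv_def)
  also have "(A * X) * (A * Y) = (A * X * A) * Y"
    using assoc_mult_mat[OF mult_carrier_mat[OF A Xc] A Yc] by simp
  also have "\<dots> = A * Y"
    using X by (simp add: is_pinv_def)
  finally show ?thesis .
qed

lemma is_pinv_unique:
  assumes X: "is_pinv A X" and Y: "is_pinv A Y"
  shows "X = Y"
proof -
  obtain r c where A: "A \<in> carrier_mat r c"
    by (rule that[OF carrier_matI[OF refl refl]])
  have Xc: "X \<in> carrier_mat c r" and Yc: "Y \<in> carrier_mat c r"
    using is_pinv_carrier[OF X] is_pinv_carrier[OF Y] carrier_matD[OF A] by simp_all
  have "transpose_mat (X * A) = transpose_mat (Y * A)"
    using is_pinv_left_mult_unique[OF is_pinv_transpose[OF X] is_pinv_transpose[OF Y]]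
    by (simp add: transpose_mult[OF Xc A] transpose_mult[OF Yc A])
  then have XA: "X * A = Y * A"
    by (metis Matrix.transpose_transpose)
  have "X = X * A * X"
    using X by (simp add: is_pinv_def)
  also have "\<dots> = X * (A * Y)"
    using assoc_mult_mat[OF Xc A Xc] is_pinv_left_mult_unique[OF X Y] by simp
  also have "\<dots> = Y * A * Y"
    using assoc_mult_mat[OF Xc A Yc] XA by simp
  also have "\<dots> = Y"
    using Y by (simp add: is_pinv_def)
  finally show ?thesis .
qed

lemma pinv_eqI: "is_pinv A X \<Longrightarrow> pinv A = X"
  unfolding pinv_def by (blast intro: is_pinv_unique)

lemma minus_zero_mat [simp]:
  "(A :: 'a :: group_add mat) \<in> carrier_mat nr nc \<Longrightarrow> A - 0\<^sub>m nr nc = A"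
  by (intro eq_matI) auto

lemma mat_eq_minus_of_add_eq:
  fixes A B C :: "'a :: ab_group_add mat"
  assumes "A \<in> carrier_mat nr nc" "B \<in> carrier_mat nr nc" "A + B = C"
  shows "A = C - B"
  using assms unfolding assms(3)[symmetric] by (intro eq_matI) auto

lemma is_pinv_inverse_plus_projection:
  fixes A P M :: "real mat"
  assumes A: "A \<in> carrier_mat n n" and P: "P \<in> carrier_mat n n" and M: "M \<in> carrier_mat n n"
    and PT: "transpose_mat P = P" and AP: "A * P = 0\<^sub>m n n" and PA: "P * A = 0\<^sub>m n n"
    and PP: "P * P = P" and MAP: "M * (A + P) = 1\<^sub>m n" and APM: "(A + P) * M = 1\<^sub>m n"
  shows "is_pinv A (M - P)" and "(M - P) * A = 1\<^sub>m n - P"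
proof -
  have AP_c: "A + P \<in> carrier_mat n n" using A P by simp
  have MP: "M * P = P"
  proof -
    have "(A + P) * P = P" using add_mult_distrib_mat[OF A P P] AP PP P by simp
    then have "M * P = (M * (A + P)) * P" using assoc_mult_mat[OF M AP_c P] by simp
    then show ?thesis using MAP P by simp
  qed
  have PM: "P * M = P"
  proof -
    have "P * (A + P) = P" using mult_add_distrib_mat[OF P A P] PA PP P by simp
    then have "P * M = P * ((A + P) * M)" using assoc_mult_mat[OF P AP_c M] by simp
    then show ?thesis using APM P by simp
  qed
  have MA: "M * A = 1\<^sub>m n - P"
    using mat_eq_minus_of_add_eq[of "M * A" n n P] mult_add_distrib_mat[OF M A P] MAP MP M A P
    by simp
  have AM: "A * M = 1\<^sub>m n - P"
    using mat_eq_minus_of_add_eq[of "A * M" n n P] add_mult_distrib_mat[OF A P M] APM PM M A P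
    by simp
  define X where "X = M - P"
  have X: "X \<in> carrier_mat n n" unfolding X_def using P by (rule minus_carrier_mat)
  have Q: "1\<^sub>m n - P \<in> carrier_mat n n" using P by (rule minus_carrier_mat)
  have XA: "X * A = 1\<^sub>m n - P"
    unfolding X_def using minus_mult_distrib_mat[OF M P A] MA PA Q by simp
  have AX: "A * X = 1\<^sub>m n - P"
    unfolding X_def using mult_minus_distrib_mat[OF A M P] AM AP Q by simp
  have PX: "P * X = 0\<^sub>m n n"
    unfolding X_def using mult_minus_distrib_mat[OF P M P] PM PP P by simp
  have "(1\<^sub>m n - P) * A = A"
    using minus_mult_distrib_mat[OF one_carrier_mat P A] PA A by simp
  moreover have "(1\<^sub>m n - P) * X = X"
    using minus_mult_distrib_mat[OF one_carrier_mat P X] PX X by simp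
  moreover have "transpose_mat (1\<^sub>m n - P) = 1\<^sub>m n - P"
    using transpose_minus[OF one_carrier_mat P] PT by simp
  ultimately show "is_pinv A X" and "X * A = 1\<^sub>m n - P"
    unfolding is_pinv_def using A X XA AX by auto
qed

lemma mean_proj_mult_laplacian_plus_mean_proj:
  assumes "simple_graph_edges n Es" and "n > 0"
  shows "mean_proj n * (laplacian n Es + mean_proj n) = mean_proj n"
  using mult_add_distrib_mat[OF mean_proj_carrier laplacian_carrier mean_proj_carrier]
  by (simp add: mean_proj_mult_laplacian[OF assms(1)] mean_proj_idempotent[OF assms(2)])

lemma laplacian_plus_mean_proj_kernel:
  assumes sg: "simple_graph_edges n Es" and cg: "connected_graph n Es" and n: "n > 0"
    and x: "x \<in> carrier_vec n" and Mx: "(laplacian n Es + mean_proj n) *\<^sub>v x = 0\<^sub>v n"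
  shows "x = 0\<^sub>v n"
proof -
  have LP: "laplacian n Es + mean_proj n \<in> carrier_mat n n" by simp
  have "mean_proj n *\<^sub>v x = mean_proj n *\<^sub>v ((laplacian n Es + mean_proj n) *\<^sub>v x)"
    using assoc_mult_mat_vec[OF mean_proj_carrier LP x]
    by (simp add: mean_proj_mult_laplacian_plus_mean_proj[OF sg n])
  also have "\<dots> = 0\<^sub>v n"
    unfolding Mx by (intro eq_vecI) auto
  finally have Px: "mean_proj n *\<^sub>v x = 0\<^sub>v n" .
  have "laplacian n Es *\<^sub>v x + mean_proj n *\<^sub>v x = 0\<^sub>v n"
    using Mx add_mult_distrib_mat_vec[OF laplacian_carrier mean_proj_carrier x] by simp
  then have Lx: "laplacian n Es *\<^sub>v x = 0\<^sub>v n"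
    unfolding Px using mult_mat_vec_carrier[OF laplacian_carrier x] by simp
  have const: "x $ i = x $ 0" if "i < n" for i
    using laplacian_kernel_const[OF sg cg x Lx that n] .
  have "(\<Sum>j<n. x $ j) / real n = (mean_proj n *\<^sub>v x) $ 0"
    by (rule mean_proj_mult_vec[OF x n, symmetric])
  also have "\<dots> = 0"
    unfolding Px using n by simp
  finally have "(\<Sum>j<n. x $ j) / real n = 0" .
  moreover have "(\<Sum>j<n. x $ j) = (\<Sum>j<n. x $ 0)"
    by (rule sum.cong) (auto intro: const)
  ultimately have x0: "x $ 0 = 0"
    using n by simp
  show ?thesis
  proof (intro eq_vecI)
    fix i assume "i < dim_vec (0\<^sub>v n :: real vec)"
    then show "x $ i = 0\<^sub>v n $ i"
      using const[of i] x0 by simp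
  qed (use x in simp)
qed

lemma laplacian_plus_mean_proj_invertible:
  assumes "simple_graph_edges n Es" and "connected_graph n Es" and "n > 0"
  obtains M where "M \<in> carrier_mat n n"
    and "M * (laplacian n Es + mean_proj n) = 1\<^sub>m n" and "(laplacian n Es + mean_proj n) * M = 1\<^sub>m n"
proof -
  have LP: "laplacian n Es + mean_proj n \<in> carrier_mat n n" by simp
  have "det (laplacian n Es + mean_proj n) \<noteq> 0"
    using det_0_iff_vec_prod_zero[OF LP] laplacian_plus_mean_proj_kernel[OF assms] by blast
  from det_non_zero_imp_unit[OF LP this, of "()"]
  show ?thesis
    using that unfolding Units_def ring_mat_def by auto
qed

lemma pinv_laplacian:
  assumes "simple_graph_edges n Es" and "connected_graph n Es" and "n > 0"
  shows "pinv (laplacian n Es) \<in> carrier_mat n n"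
    and "pinv (laplacian n Es) * laplacian n Es = 1\<^sub>m n - mean_proj n"
proof -
  obtain M where M: "M \<in> carrier_mat n n"
    and inv: "M * (laplacian n Es + mean_proj n) = 1\<^sub>m n" "(laplacian n Es + mean_proj n) * M = 1\<^sub>m n"
    using laplacian_plus_mean_proj_invertible[OF assms] .
  note pinv = is_pinv_inverse_plus_projection[OF laplacian_carrier mean_proj_carrier M
      mean_proj_symmetric laplacian_mult_mean_proj[OF assms(1)] mean_proj_mult_laplacian[OF assms(1)]
      mean_proj_idempotent[OF assms(3)] inv]
  have "pinv (laplacian n Es) = M - mean_proj n"
    by (rule pinv_eqI[OF pinv(1)])
  then show "pinv (laplacian n Es) \<in> carrier_mat n n"
    and "pinv (laplacian n Es) * laplacian n Es = 1\<^sub>m n - mean_proj n"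
    using pinv(2) by (simp_all add: minus_carrier_mat)
qed

lemma pinv_laplacian_mult_laplacian_vec:
  assumes "simple_graph_edges n Es" and "connected_graph n Es" and "n > 0"
    and x: "x \<in> carrier_vec n" and "(\<Sum>i<n. x $ i) = 0"
  shows "pinv (laplacian n Es) *\<^sub>v (laplacian n Es *\<^sub>v x) = x"
proof -
  have "pinv (laplacian n Es) *\<^sub>v (laplacian n Es *\<^sub>v x) = (1\<^sub>m n - mean_proj n) *\<^sub>v x"
    using assoc_mult_mat_vec[OF pinv_laplacian(1)[OF assms(1-3)] laplacian_carrier[of n Es] x]
    by (simp add: pinv_laplacian(2)[OF assms(1-3)])
  also have "\<dots> = x - mean_proj n *\<^sub>v x"
    using minus_mult_distrib_mat_vec[OF one_carrier_mat mean_proj_carrier x] x by simp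
  also have "mean_proj n *\<^sub>v x = 0\<^sub>v n"
    using mean_proj_mult_vec[OF x] assms(5) by (intro eq_vecI) auto
  finally show ?thesis
    using x by simp
qed

section \<open>Binomial tail bounds\<close>

lemma exp_le_quadratic:
  fixes x :: real
  assumes "\<bar>x\<bar> \<le> 1"
  shows "exp x \<le> 1 + x + x\<^sup>2"
proof (cases "x \<ge> 0")
  case True
  then show ?thesis using exp_bound[of x] assms by simp
next
  case False
  define y where "y = - x"
  have y: "0 < y" "y \<le> 1" using False assms unfolding y_def by auto
  have "exp x = 1 / exp y" unfolding y_def by (simp add: exp_minus field_simps)
  also have "\<dots> \<le> 1 / (1 + y)"
    using y exp_ge_add_one_self[of y] by (intro divide_left_mono) auto
  also have "\<dots> \<le> 1 - y + y\<^sup>2"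
  proof -
    have "1 \<le> (1 - y + y\<^sup>2) * (1 + y)"
      using y by (simp add: algebra_simps power2_eq_square power3_eq_cube)
    then show ?thesis using y by (simp add: field_simps)
  qed
  also have "\<dots> = 1 + x + x\<^sup>2" unfolding y_def by simp
  finally show ?thesis .
qed

lemma bernoulli_centred_mgf_le:
  fixes p l :: real
  assumes p: "0 \<le> p" "p \<le> 1" and l: "\<bar>l\<bar> \<le> 1"
  shows "p * exp (l * (1 - p)) + (1 - p) * exp (- (l * p)) \<le> 1 + l\<^sup>2 * (p * (1 - p))"
proof -
  have "\<bar>l * (1 - p)\<bar> \<le> 1" and "\<bar>- (l * p)\<bar> \<le> 1"
    using p l by (simp_all add: abs_mult mult_le_one)
  then have "p * exp (l * (1 - p)) + (1 - p) * exp (- (l * p))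
      \<le> p * (1 + l * (1 - p) + (l * (1 - p))\<^sup>2) + (1 - p) * (1 + - (l * p) + (- (l * p))\<^sup>2)"
    using p by (intro add_mono mult_left_mono exp_le_quadratic) auto
  also have "\<dots> = 1 + l\<^sup>2 * (p * (1 - p))"
    by (simp add: algebra_simps power2_eq_square)
  finally show ?thesis .
qed

lemma binomial_centred_mgf:
  fixes p l :: real
  assumes p: "0 \<le> p" "p \<le> 1"
  shows "(\<Sum>x\<le>k. pmf (binomial_pmf k p) x * exp (l * (real x - real k * p)))
       = (p * exp (l * (1 - p)) + (1 - p) * exp (- (l * p))) ^ k"
proof -
  have "(\<Sum>x\<le>k. pmf (binomial_pmf k p) x * exp (l * (real x - real k * p)))
      = (\<Sum>x\<le>k. exp (- (l * p)) ^ k * (of_nat (k choose x) * (p * exp l) ^ x * (1 - p) ^ (k - x)))"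
  proof (rule sum.cong[OF refl])
    fix x assume "x \<in> {..k}"
    have "exp (l * (real x - real k * p)) = exp l ^ x * exp (- (l * p)) ^ k"
      by (simp add: exp_of_nat_mult[symmetric] exp_add[symmetric] algebra_simps)
    then show "pmf (binomial_pmf k p) x * exp (l * (real x - real k * p))
        = exp (- (l * p)) ^ k * (of_nat (k choose x) * (p * exp l) ^ x * (1 - p) ^ (k - x))"
      using p by (simp add: power_mult_distrib)
  qed
  also have "\<dots> = (exp (- (l * p)) * (p * exp l + (1 - p))) ^ k"
    by (simp add: binomial_ring sum_distrib_left power_mult_distrib)
  also have "exp (- (l * p)) * (p * exp l + (1 - p)) = p * exp (l * (1 - p)) + (1 - p) * exp (- (l * p))"
    by (simp add: algebra_simps exp_add[symmetric] exp_diff)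
  finally show ?thesis .
qed

lemma binomial_centred_mgf_le:
  fixes p l :: real
  assumes p: "0 \<le> p" "p \<le> 1" and l: "\<bar>l\<bar> \<le> 1"
  shows "(\<Sum>x\<le>k. pmf (binomial_pmf k p) x * exp (l * (real x - real k * p)))
       \<le> exp (real k * l\<^sup>2 * (p * (1 - p)))"
proof -
  have "(p * exp (l * (1 - p)) + (1 - p) * exp (- (l * p))) ^ k \<le> (1 + l\<^sup>2 * (p * (1 - p))) ^ k"
    using bernoulli_centred_mgf_le[OF p l] p by (intro power_mono) auto
  also have "\<dots> \<le> exp (l\<^sup>2 * (p * (1 - p))) ^ k"
    using p by (intro power_mono) auto
  also have "\<dots> = exp (real k * l\<^sup>2 * (p * (1 - p)))"
    by (simp add: exp_of_nat_mult[symmetric] mult.assoc)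
  finally show ?thesis
    using binomial_centred_mgf[OF p] by simp
qed

lemma binomial_prob_le_exp_moment:
  fixes p l t :: real and S :: "nat set"
  assumes p: "0 \<le> p" "p \<le> 1" and l: "\<bar>l\<bar> \<le> 1"
    and S: "\<And>x. x \<in> S \<Longrightarrow> t \<le> l * (real x - real k * p)"
  shows "measure_pmf.prob (binomial_pmf k p) S \<le> exp (real k * l\<^sup>2 * (p * (1 - p)) - t)"
proof -
  let ?M = "binomial_pmf k p"
  have supp: "set_pmf ?M \<subseteq> {..k}"
    using set_pmf_binomial_eq[OF p, of k] by auto
  let ?T = "S \<inter> set_pmf ?M"
  have fin: "finite ?T"
    by (rule finite_Int[OF disjI2], rule finite_subset[OF supp], simp)
  have "measure_pmf.prob ?M S = measure_pmf.prob ?M ?T"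
    by (simp add: measure_Int_set_pmf)
  also have "\<dots> = (\<Sum>x\<in>?T. pmf ?M x)"
    by (rule measure_measure_pmf_finite[OF fin])
  also have "\<dots> \<le> (\<Sum>x\<in>?T. pmf ?M x * (exp (- t) * exp (l * (real x - real k * p))))"
    using S by (intro sum_mono) (simp add: mult_le_cancel_left1 flip: exp_add)
  also have "\<dots> \<le> (\<Sum>x\<le>k. pmf ?M x * (exp (- t) * exp (l * (real x - real k * p))))"
    using supp by (intro sum_mono2) auto
  also have "\<dots> = exp (- t) * (\<Sum>x\<le>k. pmf ?M x * exp (l * (real x - real k * p)))"
    by (simp add: sum_distrib_left ac_simps)
  also have "\<dots> \<le> exp (- t) * exp (real k * l\<^sup>2 * (p * (1 - p)))"
    by (intro mult_left_mono binomial_centred_mgf_le[OF p l]) auto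
  also have "\<dots> = exp (real k * l\<^sup>2 * (p * (1 - p)) - t)"
    by (simp flip: exp_add)
  finally show ?thesis .
qed

text \<open>Unlike Hoeffding's inequality, this bound involves the variance \<open>p (1 - p)\<close> rather than
  the range; this is what makes the final error term linear rather than quadratic in \<open>b\<close>.\<close>

lemma binomial_deviation_prob:
  fixes p a :: real and k :: nat
  assumes p: "0 < p" "p < 1" and k: "k > 0"
    and a: "0 \<le> a" "a \<le> 2 * real k * (p * (1 - p))"
  shows "measure_pmf.prob (binomial_pmf k p) {x. a \<le> \<bar>real x - real k * p\<bar>}
     \<le> 2 * exp (- (a\<^sup>2 / (4 * real k * (p * (1 - p)))))"
proof -
  define v where "v = p * (1 - p)"
  have v: "v > 0" using p by (simp add: v_def)
  define l where "l = a / (2 * real k * v)"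
  have l: "0 \<le> l" "l \<le> 1"
    using a v k by (simp_all add: l_def v_def pos_divide_le_eq)
  have exponent: "real k * l\<^sup>2 * v - l * a = - (a\<^sup>2 / (4 * real k * v))"
    unfolding l_def using v k by (simp add: field_simps power2_eq_square)
  have upper: "l * a \<le> l * (real x - real k * p)" if "a \<le> real x - real k * p" for x
    using mult_left_mono[OF that l(1)] .
  have lower: "l * a \<le> - (l * (real x - real k * p))" if "real x - real k * p \<le> - a" for x
    using mult_left_mono[of a "real k * p - real x" l] that l by (simp add: algebra_simps)
  let ?M = "binomial_pmf k p"
  have "measure_pmf.prob ?M {x. a \<le> real x - real k * p} \<le> exp (real k * l\<^sup>2 * v - l * a)"
    unfolding v_def using p l by (intro binomial_prob_le_exp_moment) (auto intro: upper)
  moreover have "measure_pmf.prob ?M {x. real x - real k * p \<le> - a} \<le> exp (real k * (- l)\<^sup>2 * v - l * a)"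
    unfolding v_def using p l by (intro binomial_prob_le_exp_moment) (auto intro: lower)
  moreover have "measure_pmf.prob ?M {x. a \<le> \<bar>real x - real k * p\<bar>}
      \<le> measure_pmf.prob ?M ({x. a \<le> real x - real k * p} \<union> {x. real x - real k * p \<le> - a})"
    by (intro measure_pmf.finite_measure_mono) auto
  moreover have "measure_pmf.prob ?M ({x. a \<le> real x - real k * p} \<union> {x. real x - real k * p \<le> - a})
      \<le> measure_pmf.prob ?M {x. a \<le> real x - real k * p} + measure_pmf.prob ?M {x. real x - real k * p \<le> - a}"
    by (intro measure_subadditive) (simp_all add: measure_pmf.emeasure_finite)
  ultimately show ?thesis
    using exponent by (simp add: v_def)
qed

lemma binomial_freq_deviation_prob:
  fixes p C :: real and k :: nat
  assumes p: "0 < p" "p < 1" and k: "k > 0" and C: "0 \<le> C" "C \<le> real k * (p * (1 - p))"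
  shows "measure_pmf.prob (binomial_pmf k p) {x. 4 * (p * (1 - p)) * C / real k < (real x / real k - p)\<^sup>2}
     \<le> 2 * exp (- C)"
proof -
  define s where "s = p * (1 - p)"
  have s: "s > 0" using p by (simp add: s_def)
  define a where "a = sqrt (4 * real k * s * C)"
  have a0: "0 \<le> a" unfolding a_def using s C by simp
  have a2: "a\<^sup>2 = 4 * real k * s * C" unfolding a_def using s C by simp
  have "a\<^sup>2 \<le> 4 * real k * s * (real k * s)"
    unfolding a2 using C s by (intro mult_left_mono) (simp_all add: s_def)
  also have "\<dots> = (2 * real k * s)\<^sup>2"
    by (simp add: power2_eq_square)
  finally have a_le: "a \<le> 2 * real k * s"
    by (rule power2_le_imp_le) (use s in simp)
  have "{x. 4 * s * C / real k < (real x / real k - p)\<^sup>2} \<subseteq> {x. a \<le> \<bar>real x - real k * p\<bar>}"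
  proof safe
    fix x assume "4 * s * C / real k < (real x / real k - p)\<^sup>2"
    then have "a\<^sup>2 < (real x - real k * p)\<^sup>2"
      using k unfolding a2 by (simp add: field_simps power2_eq_square)
    then show "a \<le> \<bar>real x - real k * p\<bar>"
      using power_less_imp_less_base[of a 2 "\<bar>real x - real k * p\<bar>"] by simp
  qed
  then have "measure_pmf.prob (binomial_pmf k p) {x. 4 * s * C / real k < (real x / real k - p)\<^sup>2}
      \<le> measure_pmf.prob (binomial_pmf k p) {x. a \<le> \<bar>real x - real k * p\<bar>}"
    by (intro measure_pmf.finite_measure_mono) auto
  also have "\<dots> \<le> 2 * exp (- (a\<^sup>2 / (4 * real k * s)))"
    using p k a0 a_le unfolding s_def by (intro binomial_deviation_prob)
  also have "a\<^sup>2 / (4 * real k * s) = C"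
    unfolding a2 using s k by simp
  finally show ?thesis
    by (simp add: s_def)
qed

section \<open>Linearization of the log-odds\<close>

lemma ln_odds_linearization:
  fixes p F :: real
  defines "s \<equiv> p * (1 - p)"
  assumes p: "0 < p" "p < 1" and F: "\<bar>F - p\<bar> \<le> s / 2"
  shows "0 < F" and "F < 1"
    and "\<bar>ln (F / (1 - F)) - ln (p / (1 - p)) - (F - p) / s\<bar> \<le> 4 * (F - p)\<^sup>2 / s\<^sup>2"
proof -
  define q d where "q = 1 - p" and "d = F - p"
  have q: "0 < q" and s_pq: "s = p * q" using p by (simp_all add: q_def s_def)
  have s: "0 < s" "s \<le> p" "s \<le> q"
    using p q by (simp_all add: s_pq mult_le_cancel_left1 mult_le_cancel_right1 q_def)
  define u u' where "u = d / p" and "u' = - d / q"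
  have u2: "u\<^sup>2 \<le> d\<^sup>2 / s\<^sup>2" and u'2: "u'\<^sup>2 \<le> d\<^sup>2 / s\<^sup>2"
    using s p q by (simp_all add: u_def u'_def power_divide divide_left_mono power_mono)
  have u: "\<bar>u\<bar> \<le> 1 / 2" and u': "\<bar>u'\<bar> \<le> 1 / 2"
    using F s p q by (simp_all add: u_def u'_def d_def abs_divide abs_minus_commute field_simps)
  have Fu: "F = p * (1 + u)" and Fu': "1 - F = q * (1 + u')"
    using p q by (simp_all add: u_def u'_def d_def q_def field_simps)
  have u_pos: "0 < 1 + u" and u'_pos: "0 < 1 + u'"
    using u u' by (simp_all add: abs_le_iff)
  have "0 < p * (1 + u)" and "0 < q * (1 + u')"
    using p q u_pos u'_pos by simp_all
  then show "0 < F" and "F < 1"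
    using Fu Fu' by linarith+
  have "d / s = u - u'"
    using p q by (simp add: s_pq u_def u'_def q_def field_simps)
  moreover have "ln (F / (1 - F)) = ln p + ln (1 + u) - ln q - ln (1 + u')"
    using p q u_pos u'_pos unfolding Fu' unfolding Fu by (simp add: ln_div ln_mult)
  moreover have "ln (p / (1 - p)) = ln p - ln q"
    using p q by (simp add: ln_div q_def)
  ultimately have "ln (F / (1 - F)) - ln (p / (1 - p)) - d / s = (ln (1 + u) - u) - (ln (1 + u') - u')"
    by simp
  also have "\<bar>\<dots>\<bar> \<le> 2 * u\<^sup>2 + 2 * u'\<^sup>2"
    using abs_ln_one_plus_x_minus_x_bound[OF u] abs_ln_one_plus_x_minus_x_bound[OF u'] by linarith
  also have "\<dots> \<le> 4 * d\<^sup>2 / s\<^sup>2"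
    using u2 u'2 by simp
  finally show "\<bar>ln (F / (1 - F)) - ln (p / (1 - p)) - (F - p) / s\<bar> \<le> 4 * (F - p)\<^sup>2 / s\<^sup>2"
    by (simp add: d_def)
qed

lemma win_prob_bounds:
  fixes wa wb b :: real
  defines "p \<equiv> wa / (wa + wb)"
  assumes wa: "0 < wa" and wb: "0 < wb" and b: "wa / wb \<le> b" "wb / wa \<le> b"
  shows "0 < p" and "p < 1" and "wa / wb = p / (1 - p)"
    and "wa / wb + 2 + 1 / (wa / wb) = 1 / (p * (1 - p))"
    and "1 / (4 * b) \<le> p * (1 - p)"
proof -
  have "wa + wb \<noteq> 0" using wa wb by simp
  then have q: "1 - p = wb / (wa + wb)"
    by (simp add: p_def field_simps)
  show "0 < p" and "p < 1"
    using wa wb by (simp_all add: p_def)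
  show "wa / wb = p / (1 - p)"
    unfolding q using wa wb by (simp add: p_def)
  show v: "wa / wb + 2 + 1 / (wa / wb) = 1 / (p * (1 - p))"
    unfolding q using wa wb by (simp add: p_def field_simps power2_eq_square add_pos_pos)
  have "1 \<le> wa / wb \<or> 1 \<le> wb / wa"
    using wa wb by (cases "wb \<le> wa") (simp_all add: field_simps)
  then have "1 \<le> b"
    using b by (auto intro: order_trans)
  then have "wa / wb + 2 + 1 / (wa / wb) \<le> 4 * b"
    using b by simp
  then show "1 / (4 * b) \<le> p * (1 - p)"
    using \<open>0 < p\<close> \<open>p < 1\<close> \<open>1 \<le> b\<close> unfolding v by (simp add: field_simps)
qed

lemma ln_odds_error_le:
  fixes p F b C k :: real
  defines "s \<equiv> p * (1 - p)"
  assumes p: "0 < p" "p < 1" and b: "0 < b" "1 / (4 * b) \<le> s"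
    and C: "0 \<le> C" and k: "0 < k" "16 * C \<le> k * s"
    and F: "(F - p)\<^sup>2 \<le> 4 * s * C / k"
  shows "0 < F" and "F < 1"
    and "\<bar>ln (F / (1 - F)) - ln (p / (1 - p)) - (F - p) / s\<bar> \<le> 64 * b * C / k"
proof -
  have s: "0 < s" using p by (simp add: s_def)
  have "(F - p)\<^sup>2 \<le> 4 * s * C / k" by (fact F)
  also have "\<dots> \<le> (s / 2)\<^sup>2"
    using k s by (simp add: field_simps power2_eq_square)
  finally have "\<bar>F - p\<bar> \<le> s / 2"
    using s by (simp add: abs_le_square_iff[symmetric])
  note lin = ln_odds_linearization[OF p this[unfolded s_def], folded s_def]
  show "0 < F" and "F < 1" using lin(1,2) .
  have "4 * (F - p)\<^sup>2 / s\<^sup>2 \<le> 4 * (4 * s * C / k) / s\<^sup>2"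
    using F s by (intro divide_right_mono mult_left_mono) auto
  also have "\<dots> = 16 * C / k * (1 / s)"
    using s k by (simp add: field_simps power2_eq_square)
  also have "\<dots> \<le> 16 * C / k * (4 * b)"
    using b s C k by (intro mult_left_mono) (simp_all add: field_simps)
  also have "\<dots> = 64 * b * C / k"
    by simp
  finally show "\<bar>ln (F / (1 - F)) - ln (p / (1 - p)) - (F - p) / s\<bar> \<le> 64 * b * C / k"
    using lin(3) by linarith
qed

lemma confidence_level_bounds:
  fixes n :: nat and \<delta> C :: real
  assumes n: "0 < n" and \<delta>: "0 < \<delta>" "\<delta> \<le> exp (-1)" and C: "3 * ln (real n / \<delta>) \<le> C"
  shows "3 \<le> C" and "2 * real n ^ 2 * exp (- C) \<le> \<delta>"
proof -
  have "ln \<delta> \<le> -1" using \<delta> by (metis ln_exp ln_le_cancel_iff exp_gt_zero)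
  moreover have "0 \<le> ln (real n)" using n by simp
  moreover have ln_ratio: "ln (real n / \<delta>) = ln (real n) - ln \<delta>" using n \<delta> by (simp add: ln_div)
  ultimately show "3 \<le> C" using C by linarith
  have "ln (2 * real n ^ 2 / \<delta>) = ln 2 + 2 * ln (real n) - ln \<delta>"
    using n \<delta> by (simp add: ln_div ln_mult ln_realpow)
  also have "\<dots> \<le> C"
    using C ln_ratio \<open>ln \<delta> \<le> -1\<close> \<open>0 \<le> ln (real n)\<close> ln_2_less_1 by linarith
  finally have "exp (ln (2 * real n ^ 2 / \<delta>)) \<le> exp C"
    by simp
  then have "2 * real n ^ 2 / \<delta> \<le> exp C"
    using n \<delta> by simp
  then show "2 * real n ^ 2 * exp (- C) \<le> \<delta>"
    using \<delta> by (simp add: exp_minus field_simps)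
qed

section \<open>The comparison model\<close>

lemma comparisons_marginal_prob:
  assumes "e < length Es"
  shows "measure_pmf.prob (comparisons w Es k) {X. P (X e)}
       = measure_pmf.prob (binomial_pmf k (p_edge w Es e)) {x. P x}"
proof -
  have "map_pmf (\<lambda>X. X e) (comparisons w Es k) = binomial_pmf k (p_edge w Es e)"
    unfolding comparisons_def using Pi_pmf_component[of "{..<length Es}" e 0] assms by simp
  then show ?thesis
    by (metis (no_types) measure_map_pmf vimage_Collect_eq)
qed

lemma E_max_ge_one:
  assumes sg: "simple_graph_edges n Es" and "Es \<noteq> []"
  shows "1 \<le> E_max n Es"
proof -
  obtain a c where ac: "Es ! 0 = (a, c)" by fastforce
  have e0: "0 < length Es" using assms(2) by simp
  have a: "a < n" and c: "c < n" and "a \<noteq> c"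
    using simple_graph_edge_endpoints[OF sg e0] ac by auto
  have "(a, c) \<in> set Es" using ac nth_mem[OF e0] by simp
  then have "simple_path Es a c [a, c]"
    using \<open>a \<noteq> c\<close> by (auto simp: simple_path_def adjacent_def less_Suc_eq)
  moreover have "edge_on_path Es 0 [a, c]"
    unfolding edge_on_path_def using ac by (intro exI[of _ 0]) auto
  ultimately have "0 \<in> path_edges Es a c"
    using e0 unfolding path_edges_def by blast
  moreover have "finite (path_edges Es a c)"
    by (rule finite_subset[of _ "{..<length Es}"]) (auto simp: path_edges_def)
  ultimately have "1 \<le> card (path_edges Es a c)"
    by (auto simp: Suc_le_eq card_gt_0_iff)
  also have "card (path_edges Es a c) \<le> E_max n Es"
    unfolding E_max_def
  proof (rule Max_ge)
    have "{card (path_edges Es i j) | i j. i < n \<and> j < n}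
        = (\<lambda>(i, j). card (path_edges Es i j)) ` ({..<n} \<times> {..<n})"
      by auto
    then show "finite {card (path_edges Es i j) | i j. i < n \<and> j < n}"
      by simp
  qed (use a c in blast)
  finally show ?thesis .
qed

definition freq_concentrated :: "(nat \<Rightarrow> real) \<Rightarrow> (nat \<times> nat) list \<Rightarrow> nat \<Rightarrow> real \<Rightarrow> (nat \<Rightarrow> nat) \<Rightarrow> bool" where
  "freq_concentrated w Es k C X \<longleftrightarrow>
     (\<forall>e<length Es. (F_edge k X e - p_edge w Es e)\<^sup>2
        \<le> 4 * (p_edge w Es e * (1 - p_edge w Es e)) * C / real k)"

lemma Vmat_mult_vec_nth:
  assumes "x \<in> carrier_vec (length Es)" and "e < length Es"
  shows "(Vmat w Es *\<^sub>v x) $ e = v_edge w Es e * x $ e"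
proof -
  have "(Vmat w Es *\<^sub>v x) $ e = row (Vmat w Es) e \<bullet> x"
    using assms(2) by (simp add: Vmat_def)
  also have "\<dots> = (\<Sum>f<length Es. (if e = f then v_edge w Es e * x $ f else 0))"
    using assms unfolding scalar_prod_def lessThan_atLeast0
    by (intro sum.cong) (auto simp: Vmat_def)
  finally show ?thesis
    using assms(2) by simp
qed

lemma Delta_nth:
  assumes "e < length Es"
  shows "Delta w Es k X $ e
    = ln (R_edge k X e) - ln (rho_edge w Es e) - v_edge w Es e * (F_edge k X e - p_edge w Es e)"
  using assms Vmat_mult_vec_nth[of "Fvec Es k X - pvec w Es" Es e w]
  by (simp add: Delta_def logR_def logrho_def Vmat_def Fvec_def pvec_def)

locale comparison_model =
  fixes n :: nat and Es :: "(nat \<times> nat) list" and w :: "nat \<Rightarrow> real" and b :: real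
  assumes n_pos: "0 < n"
    and simple: "simple_graph_edges n Es"
    and connected: "connected_graph n Es"
    and w_pos: "\<And>i. i < n \<Longrightarrow> 0 < w i"
    and w_ratio: "\<And>i j. i < n \<Longrightarrow> j < n \<Longrightarrow> w i / w j \<le> b"
begin

lemma one_le_b: "1 \<le> b"
  using w_ratio[OF n_pos n_pos] w_pos[OF n_pos] by simp

lemma sample_size_pos:
  assumes "0 < C" and "64 * b * C \<le> real k"
  shows "0 < k"
proof -
  have "0 < 64 * b * C" using one_le_b assms(1) by simp
  then show ?thesis using assms(2) by linarith
qed

lemma p_edge_bounds:
  assumes "e < length Es"
  shows "0 < p_edge w Es e" and "p_edge w Es e < 1"
    and "1 / (4 * b) \<le> p_edge w Es e * (1 - p_edge w Es e)"
    and "rho_edge w Es e = p_edge w Es e / (1 - p_edge w Es e)"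
    and "v_edge w Es e = 1 / (p_edge w Es e * (1 - p_edge w Es e))"
proof -
  note uv = simple_graph_edge_endpoints[OF simple assms]
  note win = win_prob_bounds[OF w_pos[OF uv(1)] w_pos[OF uv(2)]
      w_ratio[OF uv(1) uv(2)] w_ratio[OF uv(2) uv(1)], folded p_edge_def]
  show "0 < p_edge w Es e" "p_edge w Es e < 1"
    and "1 / (4 * b) \<le> p_edge w Es e * (1 - p_edge w Es e)"
    and "rho_edge w Es e = p_edge w Es e / (1 - p_edge w Es e)"
    and "v_edge w Es e = 1 / (p_edge w Es e * (1 - p_edge w Es e))"
    using win by (simp_all add: rho_edge_def v_edge_def)
qed

lemma sample_size_edge:
  assumes "e < length Es" and "0 \<le> C" and "64 * b * C \<le> real k"
  shows "16 * C \<le> real k * (p_edge w Es e * (1 - p_edge w Es e))"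
proof -
  have "16 * C = 64 * b * C * (1 / (4 * b))" using one_le_b by simp
  also have "\<dots> \<le> real k * (p_edge w Es e * (1 - p_edge w Es e))"
    using assms p_edge_bounds(3)[OF assms(1)] one_le_b by (intro mult_mono) auto
  finally show ?thesis .
qed

lemma Delta_nth_ln_odds:
  assumes "e < length Es"
  shows "Delta w Es k X $ e = ln (F_edge k X e / (1 - F_edge k X e))
    - ln (p_edge w Es e / (1 - p_edge w Es e))
    - (F_edge k X e - p_edge w Es e) / (p_edge w Es e * (1 - p_edge w Es e))"
  using Delta_nth[OF assms] p_edge_bounds[OF assms] by (simp add: R_edge_def)

lemma logrho_eq_incidence_transpose:
  "logrho w Es = transpose_mat (incidence n Es) *\<^sub>v logw n w"
proof (intro eq_vecI)
  fix e assume "e < dim_vec (transpose_mat (incidence n Es) *\<^sub>v logw n w)"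
  then have e: "e < length Es" by simp
  note uv = simple_graph_edge_endpoints[OF simple e]
  have "(transpose_mat (incidence n Es) *\<^sub>v logw n w) $ e = ln (w (fst (Es ! e))) - ln (w (snd (Es ! e)))"
    using incidence_transpose_mult_vec[OF simple _ e, of "logw n w"] uv by (simp add: logw_def)
  also have "\<dots> = ln (rho_edge w Es e)"
    using w_pos[OF uv(1)] w_pos[OF uv(2)] by (simp add: rho_edge_def ln_div)
  finally show "logrho w Es $ e = (transpose_mat (incidence n Es) *\<^sub>v logw n w) $ e"
    using e by (simp add: logrho_def)
qed (simp add: logrho_def)

lemma logWhat_decomposition:
  assumes norm: "(\<Sum>i<n. ln (w i)) = 0"
  shows "logWhat n Es k X - logw n w =
     pinv (laplacian n Es) *\<^sub>v (incidence n Es *\<^sub>v (Vmat w Es *\<^sub>v (Fvec Es k X - pvec w Es)))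
     + pinv (laplacian n Es) *\<^sub>v (incidence n Es *\<^sub>v Delta w Es k X)"
proof -
  let ?P = "pinv (laplacian n Es)" and ?B = "incidence n Es"
  let ?y = "Vmat w Es *\<^sub>v (Fvec Es k X - pvec w Es)" and ?D = "Delta w Es k X"
  have P: "?P \<in> carrier_mat n n" by (rule pinv_laplacian(1)[OF simple connected n_pos])
  have y: "?y \<in> carrier_vec (length Es)" and D: "?D \<in> carrier_vec (length Es)"
    by (simp_all add: carrier_vecI Vmat_def Delta_def logR_def)
  have logR: "logR Es k X \<in> carrier_vec (length Es)" and logrho: "logrho w Es \<in> carrier_vec (length Es)"
    and logw: "logw n w \<in> carrier_vec n"
    by (simp_all add: carrier_vecI logR_def logrho_def logw_def)
  have "?y + ?D = logR Es k X - logrho w Es"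
    by (intro eq_vecI) (auto simp: Delta_def logR_def logrho_def Vmat_def)
  then have "?B *\<^sub>v ?y + ?B *\<^sub>v ?D = ?B *\<^sub>v logR Es k X - laplacian n Es *\<^sub>v logw n w"
    using mult_add_distrib_mat_vec[OF incidence_carrier y D]
      mult_minus_distrib_mat_vec[OF incidence_carrier logR logrho]
    by (simp add: logrho_eq_incidence_transpose laplacian_mult_vec[OF logw])
  then have "?P *\<^sub>v (?B *\<^sub>v ?y) + ?P *\<^sub>v (?B *\<^sub>v ?D)
      = ?P *\<^sub>v (?B *\<^sub>v logR Es k X) - ?P *\<^sub>v (laplacian n Es *\<^sub>v logw n w)"
    using mult_add_distrib_mat_vec[OF P, of "?B *\<^sub>v ?y" "?B *\<^sub>v ?D"]
      mult_minus_distrib_mat_vec[OF P, of "?B *\<^sub>v logR Es k X" "laplacian n Es *\<^sub>v logw n w"]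
    by (simp add: carrier_vecI)
  also have "?P *\<^sub>v (laplacian n Es *\<^sub>v logw n w) = logw n w"
    using pinv_laplacian_mult_laplacian_vec[OF simple connected n_pos logw] norm
    by (simp add: logw_def)
  finally show ?thesis
    unfolding logWhat_def by simp
qed

lemma Delta_bound_if_freq_concentrated:
  assumes conc: "freq_concentrated w Es k C X" and C: "0 < C"
    and k: "Es \<noteq> [] \<Longrightarrow> 64 * b * C \<le> real k" and e: "e < length Es"
  shows "0 < R_edge k X e" and "\<bar>Delta w Es k X $ e\<bar> \<le> 64 * b * C / real k"
proof -
  note p = p_edge_bounds[OF e]
  have kC: "64 * b * C \<le> real k" using e by (auto intro: k)
  have "(F_edge k X e - p_edge w Es e)\<^sup>2 \<le> 4 * (p_edge w Es e * (1 - p_edge w Es e)) * C / real k"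
    using conc e by (simp add: freq_concentrated_def)
  note err = ln_odds_error_le[OF p(1,2) _ p(3) less_imp_le[OF C] _
      sample_size_edge[OF e less_imp_le[OF C] kC] this]
  show "0 < R_edge k X e" and "\<bar>Delta w Es k X $ e\<bar> \<le> 64 * b * C / real k"
    using err one_le_b sample_size_pos[OF C kC]
    by (simp_all add: R_edge_def Delta_nth_ln_odds[OF e])
qed

lemma prob_not_freq_concentrated:
  assumes C: "0 < C" and k: "Es \<noteq> [] \<Longrightarrow> 64 * b * C \<le> real k"
  shows "measure_pmf.prob (comparisons w Es k) {X. \<not> freq_concentrated w Es k C X}
    \<le> 2 * real (length Es) * exp (- C)"
proof -
  define s where "s e = p_edge w Es e * (1 - p_edge w Es e)" for e
  define bad where "bad e = {X. 4 * s e * C / real k < (real (X e) / real k - p_edge w Es e)\<^sup>2}" for e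
  have bad_prob: "measure_pmf.prob (comparisons w Es k) (bad e) \<le> 2 * exp (- C)"
    if "e \<in> {..<length Es}" for e
  proof -
    have e: "e < length Es" using that by simp
    note p = p_edge_bounds[OF e]
    have kC: "64 * b * C \<le> real k" using e by (auto intro: k)
    have "C \<le> real k * s e"
      using sample_size_edge[OF e less_imp_le[OF C] kC] C unfolding s_def by linarith
    have "measure_pmf.prob (comparisons w Es k) (bad e)
        = measure_pmf.prob (binomial_pmf k (p_edge w Es e))
            {x. 4 * s e * C / real k < (real x / real k - p_edge w Es e)\<^sup>2}"
      unfolding bad_def by (rule comparisons_marginal_prob[OF e])
    also have "\<dots> \<le> 2 * exp (- C)"
      unfolding s_def using p(1,2) sample_size_pos[OF C kC] C \<open>C \<le> real k * s e\<close>
      by (intro binomial_freq_deviation_prob) (auto simp: s_def)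
    finally show ?thesis .
  qed
  have "{X. \<not> freq_concentrated w Es k C X} = (\<Union>e<length Es. bad e)"
    by (auto simp: freq_concentrated_def bad_def s_def F_edge_def not_le)
  then have "measure_pmf.prob (comparisons w Es k) {X. \<not> freq_concentrated w Es k C X}
      \<le> (\<Sum>e<length Es. measure_pmf.prob (comparisons w Es k) (bad e))"
    by (simp add: measure_pmf.finite_measure_subadditive_finite)
  also have "\<dots> \<le> (\<Sum>e<length Es. 2 * exp (- C))"
    by (rule sum_mono) (rule bad_prob)
  finally show ?thesis
    by simp
qed

lemma error_expansion_prob:
  assumes norm: "(\<Sum>i<n. ln (w i)) = 0"
    and \<delta>: "0 < \<delta>" "\<delta> \<le> exp (-1)" and C: "3 * ln (real n / \<delta>) \<le> C"
    and k: "64 * b * (C + 1) * max (Omega_max n Es) (real (E_max n Es)) \<le> real k"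
  shows "1 - \<delta> \<le> measure_pmf.prob (comparisons w Es k)
         {X. (\<forall>e<length Es. 0 < R_edge k X e) \<and>
             logWhat n Es k X - logw n w =
               pinv (laplacian n Es) *\<^sub>v (incidence n Es *\<^sub>v (Vmat w Es *\<^sub>v (Fvec Es k X - pvec w Es)))
               + pinv (laplacian n Es) *\<^sub>v (incidence n Es *\<^sub>v Delta w Es k X) \<and>
             (\<forall>e<length Es. \<bar>Delta w Es k X $ e\<bar> \<le> 64 * b * C / real k)}"
proof -
  let ?M = "comparisons w Es k"
  note conf = confidence_level_bounds[OF n_pos \<delta> C]
  have C_pos: "0 < C" using conf(1) by simp
  have kC: "64 * b * C \<le> real k" if "Es \<noteq> []"
  proof -
    have "64 * b * C \<le> 64 * b * (C + 1) * 1" using one_le_b by simp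
    also have "\<dots> \<le> 64 * b * (C + 1) * max (Omega_max n Es) (real (E_max n Es))"
      using E_max_ge_one[OF simple that] one_le_b C_pos by (intro mult_left_mono) auto
    finally show ?thesis using k by simp
  qed
  have "measure_pmf.prob ?M {X. \<not> freq_concentrated w Es k C X} \<le> 2 * real (length Es) * exp (- C)"
    by (rule prob_not_freq_concentrated) (use C_pos kC in auto)
  also have "\<dots> \<le> 2 * real (n * n) * exp (- C)"
    using length_edges_le[OF simple]
    by (intro mult_right_mono mult_left_mono) (auto simp flip: of_nat_mult)
  also have "\<dots> \<le> \<delta>" using conf(2) by (simp add: power2_eq_square)
  finally have "1 - \<delta> \<le> measure_pmf.prob ?M {X. freq_concentrated w Es k C X}"
    using measure_pmf.prob_compl[of "{X. freq_concentrated w Es k C X}" ?M]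
    by (simp add: Compl_eq_Diff_UNIV[symmetric] Collect_neg_eq)
  also have "\<dots> \<le> measure_pmf.prob ?M {X. (\<forall>e<length Es. 0 < R_edge k X e) \<and>
             logWhat n Es k X - logw n w =
               pinv (laplacian n Es) *\<^sub>v (incidence n Es *\<^sub>v (Vmat w Es *\<^sub>v (Fvec Es k X - pvec w Es)))
               + pinv (laplacian n Es) *\<^sub>v (incidence n Es *\<^sub>v Delta w Es k X) \<and>
             (\<forall>e<length Es. \<bar>Delta w Es k X $ e\<bar> \<le> 64 * b * C / real k)}"
    using logWhat_decomposition[OF norm]
    by (intro measure_pmf.finite_measure_mono) (auto intro: Delta_bound_if_freq_concentrated C_pos kC)
  finally show ?thesis .
qed

end

theorem lemma2:
  "\<exists>c1 c2 C0 :: real. c1 > 0 \<and> c2 > 0 \<and> C0 > 0 \<and>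
    (\<forall>(n::nat) (Es :: (nat \<times> nat) list) (w :: nat \<Rightarrow> real) (b::real) (\<delta>::real) (C::real) (k::nat).
       0 < n \<longrightarrow> simple_graph_edges n Es \<longrightarrow> connected_graph n Es \<longrightarrow>
       (\<forall>i<n. w i > 0) \<longrightarrow> (\<forall>i<n. \<forall>j<n. w i / w j \<le> b) \<longrightarrow>
       (\<Sum>i<n. ln (w i)) = 0 \<longrightarrow>
       0 < \<delta> \<longrightarrow> \<delta> \<le> exp (-1) \<longrightarrow>
       C \<ge> c1 * ln (real n / \<delta>) \<longrightarrow>
       real k \<ge> c2 * b * (C + 1) * max (Omega_max n Es) (real (E_max n Es)) \<longrightarrow>
       measure_pmf.prob (comparisons w Es k)
         {X. (\<forall>e<length Es. 0 < R_edge k X e) \<and>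
             logWhat n Es k X - logw n w =
               mult_mat_vec (pinv (laplacian n Es)) (mult_mat_vec (incidence n Es) (mult_mat_vec (Vmat w Es) (Fvec Es k X - pvec w Es)))
               + mult_mat_vec (pinv (laplacian n Es)) (mult_mat_vec (incidence n Es) (Delta w Es k X)) \<and>
             (\<forall>e<length Es. \<bar>vec_index (Delta w Es k X) e\<bar> \<le> C0 * b * C / real k)}
         \<ge> 1 - \<delta>)"
  by (rule exI[of _ "3 :: real"], rule exI[of _ "64 :: real"], rule exI[of _ "64 :: real"],
      intro conjI allI impI comparison_model.error_expansion_prob comparison_model.intro) simp_all

end
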